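(* The set of parallelogram polyominoes equals $Av_{\mathfrak{P}}\left(\begin{bmatrix}1&0\\1&1\end{bmatrix},\begin{bmatrix}1&1\\0&1\end{bmatrix}\right)$.
   Context: A polyomino is a finite union of unit cells of $\mathbb{Z}\times\mathbb{Z}$ that is connected via edge adjacency, up to translation, identified with the binary matrix of its minimal bounding rectangle (entry $1$ iff the corresponding unit square is a cell; rows numbered bottom to top, and in displayed matrices the first written row is the top row). A matrix is a submatrix of another if obtained by deleting rows and/or columns; $Av_{\mathfrak{P}}(\mathcal{M})$ is the set of polyominoes with no submatrix in $\mathcal{M}$. A parallelogram polyomino is a polyomino whose boundary can be decomposed into two lattice paths (upper and lower) made of north and east unit steps which meet only at their common starting and ending points. *)

theory Defs
  imports Main
begin

text \<open>A cell (x,y) is the unit square [x,x+1] x [y,y+1]; x is the column, y the row.\<close>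
type_synonym cell = "int \<times> int"

definition edge_adjacent :: "cell \<Rightarrow> cell \<Rightarrow> bool" where
  "edge_adjacent c d \<longleftrightarrow> \<bar>fst c - fst d\<bar> + \<bar>snd c - snd d\<bar> = 1"

definition polyomino :: "cell set \<Rightarrow> bool" where
  "polyomino P \<longleftrightarrow> finite P \<and> P \<noteq> {} \<and>
     (\<forall>c\<in>P. \<forall>d\<in>P. (c, d) \<in> {(a, b). a \<in> P \<and> b \<in> P \<and> edge_adjacent a b}\<^sup>*)"

text \<open>A binary matrix: (number of rows, number of columns, entries); row 0 is the bottom row.\<close>
type_synonym bmatrix = "nat \<times> nat \<times> (nat \<Rightarrow> nat \<Rightarrow> bool)"

text \<open>Matrix given as displayed: list of rows, first written row is the top row.\<close>
definition mat_of_rows :: "nat list list \<Rightarrow> bmatrix" where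
  "mat_of_rows rs = (length rs, length (hd rs),
     (\<lambda>i j. rs ! (length rs - 1 - i) ! j = 1))"

definition submatrix :: "bmatrix \<Rightarrow> bmatrix \<Rightarrow> bool" where
  "submatrix A B \<longleftrightarrow> (case A of (m, n, a) \<Rightarrow> case B of (p, q, b) \<Rightarrow>
     (\<exists>f g. strict_mono_on {..<m} f \<and> (\<forall>i<m. f i < p) \<and>
            strict_mono_on {..<n} g \<and> (\<forall>j<n. g j < q) \<and>
            (\<forall>i<m. \<forall>j<n. a i j = b (f i) (g j))))"

definition poly_matrix :: "cell set \<Rightarrow> bmatrix" where
  "poly_matrix P = (let xmin = Min (fst ` P); xmax = Max (fst ` P);
                        ymin = Min (snd ` P); ymax = Max (snd ` P)
     in (nat (ymax - ymin + 1), nat (xmax - xmin + 1),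
         (\<lambda>i j. (xmin + int j, ymin + int i) \<in> P)))"

definition Av_P :: "bmatrix set \<Rightarrow> cell set set" where
  "Av_P M = {P. polyomino P \<and> (\<forall>A\<in>M. \<not> submatrix A (poly_matrix P))}"

text \<open>Unit lattice edges: H (x,y) joins (x,y),(x+1,y); V (x,y) joins (x,y),(x,y+1).\<close>
datatype edge = H "int \<times> int" | V "int \<times> int"

definition cell_edges :: "cell \<Rightarrow> edge set" where
  "cell_edges c = (case c of (x, y) \<Rightarrow> {H (x, y), H (x, y + 1), V (x, y), V (x + 1, y)})"

definition boundary_edges :: "cell set \<Rightarrow> edge set" where
  "boundary_edges P = {e. card {c\<in>P. e \<in> cell_edges c} = 1}"

text \<open>Lattice paths with north (True) and east (False) unit steps.\<close>
fun step :: "int \<times> int \<Rightarrow> bool \<Rightarrow> int \<times> int" where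
  "step (x, y) True = (x, y + 1)"
| "step (x, y) False = (x + 1, y)"

fun path_points :: "int \<times> int \<Rightarrow> bool list \<Rightarrow> (int \<times> int) list" where
  "path_points p [] = [p]"
| "path_points p (s # ss) = p # path_points (step p s) ss"

fun path_edges :: "int \<times> int \<Rightarrow> bool list \<Rightarrow> edge set" where
  "path_edges p [] = {}"
| "path_edges p (True # ss) = insert (V p) (path_edges (step p True) ss)"
| "path_edges p (False # ss) = insert (H p) (path_edges (step p False) ss)"

definition path_end :: "int \<times> int \<Rightarrow> bool list \<Rightarrow> int \<times> int" where
  "path_end p ss = last (path_points p ss)"

definition parallelogram_polyomino :: "cell set \<Rightarrow> bool" where
  "parallelogram_polyomino P \<longleftrightarrow> polyomino P \<and>
     (\<exists>p u l. path_end p u = path_end p l \<and>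
        set (path_points p u) \<inter> set (path_points p l) = {p, path_end p u} \<and>
        path_edges p u \<inter> path_edges p l = {} \<and>
        boundary_edges P = path_edges p u \<union> path_edges p l)"

end

theory Submission
  imports Defs
begin

text \<open>A parallelogram polyomino is bounded by two north-east paths, and along such a path the
  vertical edges move weakly right from row to row, at most one per row. Every row of the polyomino
  has at least two vertical boundary edges, hence exactly one on each path, and either forbidden
  submatrix would force one of the two paths to move left on its way up.

  Conversely, let P avoid both patterns. Growing a connected subset of P one adjacent cell at a
  time shows that the rectangle spanned by any two cells of P in north-west/south-east position
  lies in P. So the rows of P are intervals whose left and right ends move weakly right, and
  consecutive rows overlap; the staircase along the left ends and the top row and the one along the
  bottom row and the right ends are then the two boundary paths.\<close>

section \<open>Pattern avoidance in cell coordinates\<close>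

text \<open>Both forbidden matrices have their north-west and south-east entries equal to 1 and exactly
  one of the other two entries equal to 0: whenever the north-west and south-east corners of a
  rectangle are cells, its south-west and north-east corners must be both cells or both not.\<close>
definition avoids_corner_patterns :: "cell set \<Rightarrow> bool" where
  "avoids_corner_patterns P \<longleftrightarrow>
     (\<forall>x1 x2 y1 y2. x1 < x2 \<longrightarrow> y1 < y2 \<longrightarrow> (x1, y2) \<in> P \<longrightarrow> (x2, y1) \<in> P \<longrightarrow>
        ((x1, y1) \<in> P \<longleftrightarrow> (x2, y2) \<in> P))"

lemma submatrix_2x2_iff:
  "submatrix (2, 2, a) (p, q, b) \<longleftrightarrow>
     (\<exists>i0 i1 j0 j1. i0 < i1 \<and> i1 < p \<and> j0 < j1 \<and> j1 < q \<and>
        a 0 0 = b i0 j0 \<and> a 0 1 = b i0 j1 \<and> a 1 0 = b i1 j0 \<and> a 1 1 = b i1 j1)"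
  (is "?sub \<longleftrightarrow> ?idx")
proof
  assume ?sub
  then obtain f g where "strict_mono_on {..<2} f" "\<forall>i<2. f i < p"
    "strict_mono_on {..<2} g" "\<forall>j<2. g j < q" "\<forall>i<2. \<forall>j<2. a i j = b (f i) (g j)"
    unfolding submatrix_def by blast
  then show ?idx
    by (intro exI[of _ "f 0"] exI[of _ "f 1"] exI[of _ "g 0"] exI[of _ "g 1"])
       (auto simp: strict_mono_on_def)
next
  assume ?idx
  then obtain i0 i1 j0 j1 where idx: "i0 < i1" "i1 < p" "j0 < j1" "j1 < q"
    "a 0 0 = b i0 j0" "a 0 1 = b i0 j1" "a 1 0 = b i1 j0" "a 1 1 = b i1 j1" by blast
  define f where "f i = (if i = 0 then i0 else i1)" for i :: nat
  define g where "g j = (if j = 0 then j0 else j1)" for j :: nat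
  have "i = 0 \<or> i = 1" if "i < 2" for i :: nat using that by auto
  then have "\<forall>i<2. \<forall>j<2. a i j = b (f i) (g j)"
    using idx by (auto simp: f_def g_def)
  moreover have "strict_mono_on {..<2} f" "strict_mono_on {..<2} g"
    using idx by (auto simp: strict_mono_on_def f_def g_def)
  moreover have "\<forall>i<2. f i < p" "\<forall>j<2. g j < q"
    using idx by (auto simp: f_def g_def)
  ultimately show ?sub unfolding submatrix_def by blast
qed

text \<open>The entries a 1 0 and a 0 1 are the north-west and south-east corners; requiring them to be
  1 keeps any matching rectangle inside the bounding box.\<close>
lemma submatrix_2x2_poly_matrix_iff:
  assumes "finite P" and "a 1 0" and "a 0 1"
  shows "submatrix (2, 2, a) (poly_matrix P) \<longleftrightarrow>
     (\<exists>x1 x2 y1 y2. x1 < x2 \<and> y1 < y2 \<and>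
        a 0 0 = ((x1, y1) \<in> P) \<and> a 0 1 = ((x2, y1) \<in> P) \<and>
        a 1 0 = ((x1, y2) \<in> P) \<and> a 1 1 = ((x2, y2) \<in> P))"
  (is "_ \<longleftrightarrow> (\<exists>x1 x2 y1 y2. x1 < x2 \<and> y1 < y2 \<and> ?corners x1 x2 y1 y2)")
proof -
  define xmin xmax ymin ymax
    where "xmin = Min (fst ` P)" and "xmax = Max (fst ` P)"
      and "ymin = Min (snd ` P)" and "ymax = Max (snd ` P)"
  have bounds: "xmin \<le> x \<and> x \<le> xmax \<and> ymin \<le> y \<and> y \<le> ymax" if "(x, y) \<in> P" for x y
    using assms(1) that unfolding xmin_def xmax_def ymin_def ymax_def
    by (auto intro!: Min_le Max_ge simp: image_iff; force)
  have "submatrix (2, 2, a) (poly_matrix P) \<longleftrightarrow>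
     (\<exists>i0 i1 j0 j1. i0 < i1 \<and> i1 < nat (ymax - ymin + 1) \<and> j0 < j1 \<and> j1 < nat (xmax - xmin + 1) \<and>
        ?corners (xmin + int j0) (xmin + int j1) (ymin + int i0) (ymin + int i1))"
    unfolding poly_matrix_def Let_def submatrix_2x2_iff xmin_def xmax_def ymin_def ymax_def
    by (simp only: prod.case)
  also have "\<dots> \<longleftrightarrow> (\<exists>x1 x2 y1 y2. x1 < x2 \<and> y1 < y2 \<and> ?corners x1 x2 y1 y2)"
  proof
    assume "\<exists>i0 i1 j0 j1. i0 < i1 \<and> i1 < nat (ymax - ymin + 1) \<and> j0 < j1 \<and>
        j1 < nat (xmax - xmin + 1) \<and> ?corners (xmin + int j0) (xmin + int j1) (ymin + int i0) (ymin + int i1)"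
    then obtain i0 i1 j0 j1 where "i0 < i1" "j0 < j1"
      and "?corners (xmin + int j0) (xmin + int j1) (ymin + int i0) (ymin + int i1)"
      by blast
    moreover have "xmin + int j0 < xmin + int j1" "ymin + int i0 < ymin + int i1"
      using \<open>i0 < i1\<close> \<open>j0 < j1\<close> by auto
    ultimately show "\<exists>x1 x2 y1 y2. x1 < x2 \<and> y1 < y2 \<and> ?corners x1 x2 y1 y2"
      by blast
  next
    assume "\<exists>x1 x2 y1 y2. x1 < x2 \<and> y1 < y2 \<and> ?corners x1 x2 y1 y2"
    then obtain x1 x2 y1 y2 where lt: "x1 < x2" "y1 < y2" and corners: "?corners x1 x2 y1 y2"
      by blast
    then have "(x1, y2) \<in> P" "(x2, y1) \<in> P" using assms(2,3) by auto
    then have "xmin \<le> x1" "x2 \<le> xmax" "ymin \<le> y1" "y2 \<le> ymax" using bounds by auto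
    then have coords: "xmin + int (nat (x1 - xmin)) = x1" "xmin + int (nat (x2 - xmin)) = x2"
      "ymin + int (nat (y1 - ymin)) = y1" "ymin + int (nat (y2 - ymin)) = y2"
      "nat (y1 - ymin) < nat (y2 - ymin)" "nat (y2 - ymin) < nat (ymax - ymin + 1)"
      "nat (x1 - xmin) < nat (x2 - xmin)" "nat (x2 - xmin) < nat (xmax - xmin + 1)"
      using lt by auto
    show "\<exists>i0 i1 j0 j1. i0 < i1 \<and> i1 < nat (ymax - ymin + 1) \<and> j0 < j1 \<and>
        j1 < nat (xmax - xmin + 1) \<and> ?corners (xmin + int j0) (xmin + int j1) (ymin + int i0) (ymin + int i1)"
      by (intro exI[of _ "nat (y1 - ymin)"] exI[of _ "nat (y2 - ymin)"]
                exI[of _ "nat (x1 - xmin)"] exI[of _ "nat (x2 - xmin)"]) (simp only: coords corners)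
  qed
  finally show ?thesis .
qed

lemma Av_P_corner_patterns:
  "Av_P {mat_of_rows [[1, 0], [1, 1]], mat_of_rows [[1, 1], [0, 1]]} =
     {P. polyomino P \<and> avoids_corner_patterns P}"
proof -
  have "\<not> submatrix (mat_of_rows [[1, 0], [1, 1]]) (poly_matrix P) \<and>
        \<not> submatrix (mat_of_rows [[1, 1], [0, 1]]) (poly_matrix P) \<longleftrightarrow>
        avoids_corner_patterns P"
    if "finite P" for P
  proof -
    have "submatrix (mat_of_rows [[1, 0], [1, 1]]) (poly_matrix P) \<longleftrightarrow>
      (\<exists>x1 x2 y1 y2. x1 < x2 \<and> y1 < y2 \<and>
        (x1, y1) \<in> P \<and> (x2, y1) \<in> P \<and> (x1, y2) \<in> P \<and> (x2, y2) \<notin> P)"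
      using submatrix_2x2_poly_matrix_iff[OF that, of "\<lambda>i j. [[1::nat, 0], [1, 1]] ! (1 - i) ! j = 1"]
      by (simp add: mat_of_rows_def numeral_2_eq_2)
    moreover have "submatrix (mat_of_rows [[1, 1], [0, 1]]) (poly_matrix P) \<longleftrightarrow>
      (\<exists>x1 x2 y1 y2. x1 < x2 \<and> y1 < y2 \<and>
        (x1, y1) \<notin> P \<and> (x2, y1) \<in> P \<and> (x1, y2) \<in> P \<and> (x2, y2) \<in> P)"
      using submatrix_2x2_poly_matrix_iff[OF that, of "\<lambda>i j. [[1::nat, 1], [0, 1]] ! (1 - i) ! j = 1"]
      by (simp add: mat_of_rows_def numeral_2_eq_2)
    ultimately show ?thesis unfolding avoids_corner_patterns_def by blast
  qed
  then show ?thesis unfolding Av_P_def polyomino_def by auto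
qed

section \<open>Parallelogram polyominoes avoid the patterns\<close>

lemma path_edges_V_lower_bound: "V (x, y) \<in> path_edges p s \<Longrightarrow> fst p \<le> x \<and> snd p \<le> y"
  by (induction p s rule: path_edges.induct) (auto split: prod.splits)

lemma path_edges_V_mono:
  "V (x, y) \<in> path_edges p s \<Longrightarrow> V (x', y') \<in> path_edges p s \<Longrightarrow> y \<le> y' \<Longrightarrow> x \<le> x'"
proof (induction p s rule: path_edges.induct)
  case (2 p ss)
  then show ?case
    using path_edges_V_lower_bound[of x y "step p True" ss] path_edges_V_lower_bound[of x' y' "step p True" ss]
    by (cases p) auto
next
  case (3 p ss)
  then show ?case by (cases p) auto
qed auto

lemma boundary_edges_V_iff: "V (x, y) \<in> boundary_edges P \<longleftrightarrow> ((x, y) \<in> P) \<noteq> ((x - 1, y) \<in> P)"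
proof -
  have cells: "{c \<in> P. V (x, y) \<in> cell_edges c} = {(x, y), (x - 1, y)} \<inter> P"
    by (auto simp: cell_edges_def split: prod.splits)
  show ?thesis
    unfolding boundary_edges_def mem_Collect_eq cells by (cases "(x, y) \<in> P"; cases "(x - 1, y) \<in> P") auto
qed

lemma boundary_edges_H_iff: "H (x, y) \<in> boundary_edges P \<longleftrightarrow> ((x, y) \<in> P) \<noteq> ((x, y - 1) \<in> P)"
proof -
  have cells: "{c \<in> P. H (x, y) \<in> cell_edges c} = {(x, y), (x, y - 1)} \<inter> P"
    by (auto simp: cell_edges_def split: prod.splits)
  show ?thesis
    unfolding boundary_edges_def mem_Collect_eq cells by (cases "(x, y) \<in> P"; cases "(x, y - 1) \<in> P") auto
qed

lemma int_predicate_switch: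
  fixes f :: "int \<Rightarrow> bool"
  assumes "x \<le> z" and "\<not> f x" and "f z"
  shows "\<exists>j. x < j \<and> j \<le> z \<and> \<not> f (j - 1) \<and> f j"
  using assms
proof (induction z rule: int_ge_induct)
  case (step z)
  then show ?case by (cases "f z") force+
qed simp

lemma boundary_edges_V_between:
  assumes "x < z" and "((x, y) \<in> P) \<noteq> ((z, y) \<in> P)"
  shows "\<exists>j. x < j \<and> j \<le> z \<and> V (j, y) \<in> boundary_edges P"
  using int_predicate_switch[of x z "\<lambda>t. ((t, y) \<in> P) \<noteq> ((x, y) \<in> P)"] assms
  by (auto simp: boundary_edges_V_iff)

lemma finite_row:
  fixes P :: "cell set"
  assumes "finite P"
  shows "finite {x. (x, y) \<in> P}"
proof -
  have "{x. (x, y) \<in> P} \<subseteq> fst ` P" by (auto intro: rev_image_eqI)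
  then show ?thesis using assms finite_subset by blast
qed

lemma finite_row_gaps:
  fixes P :: "cell set"
  assumes "finite P"
  shows "\<exists>z<x. (z, y) \<notin> P" and "\<exists>z>x. (z, y) \<notin> P"
proof -
  have "\<not> {..<x} \<subseteq> {t. (t, y) \<in> P}" "\<not> {x<..} \<subseteq> {t. (t, y) \<in> P}"
    using finite_row[OF assms] finite_subset infinite_Iio[of x] infinite_Ioi[of x] by blast+
  then show "\<exists>z<x. (z, y) \<notin> P" "\<exists>z>x. (z, y) \<notin> P" by auto
qed

lemma boundary_edges_V_left:
  assumes "finite P" and "(x, y) \<in> P"
  shows "\<exists>j\<le>x. V (j, y) \<in> boundary_edges P"
proof -
  obtain z where "z < x" "(z, y) \<notin> P" using finite_row_gaps(1)[OF assms(1)] by blast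
  then show ?thesis using boundary_edges_V_between[of z x y P] assms(2) by force
qed

lemma boundary_edges_V_right:
  assumes "finite P" and "(x, y) \<in> P"
  shows "\<exists>j>x. V (j, y) \<in> boundary_edges P"
proof -
  obtain z where "x < z" "(z, y) \<notin> P" using finite_row_gaps(2)[OF assms(1)] by blast
  then show ?thesis using boundary_edges_V_between[of x z y P] assms(2) by force
qed

text \<open>Two distinct vertical edges in one row lie on different paths, so one of them shares a path
  with V (x, y).\<close>
lemma two_paths_V_order:
  assumes E: "E = path_edges p u \<union> path_edges p l"
    and "V (x, y) \<in> E" and "V (x1, y') \<in> E" and "V (x2, y') \<in> E" and "x1 \<noteq> x2"
  shows "y \<le> y' \<Longrightarrow> x \<le> x1 \<or> x \<le> x2" and "y' \<le> y \<Longrightarrow> x1 \<le> x \<or> x2 \<le> x"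
proof -
  have "\<not> (V (x1, y') \<in> path_edges p s \<and> V (x2, y') \<in> path_edges p s)" for s
    using path_edges_V_mono[of x1 y' p s x2 y'] path_edges_V_mono[of x2 y' p s x1 y'] assms(5)
    by auto
  then have distinct_paths: "V (x1, y') \<in> path_edges p s \<or> V (x2, y') \<in> path_edges p s"
    if "s = u \<or> s = l" for s
    using assms(3,4) that unfolding E by blast
  obtain s where s: "s = u \<or> s = l" "V (x, y) \<in> path_edges p s"
    using assms(2) unfolding E by blast
  then obtain x' where x': "x' = x1 \<or> x' = x2" "V (x', y') \<in> path_edges p s"
    using distinct_paths by blast
  show "y \<le> y' \<Longrightarrow> x \<le> x1 \<or> x \<le> x2" and "y' \<le> y \<Longrightarrow> x1 \<le> x \<or> x2 \<le> x"
    using path_edges_V_mono[OF s(2) x'(2)] path_edges_V_mono[OF x'(2) s(2)] x'(1) by auto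
qed

theorem parallelogram_avoids_corner_patterns:
  assumes "parallelogram_polyomino P"
  shows "avoids_corner_patterns P"
  unfolding avoids_corner_patterns_def
proof (intro allI impI)
  fix x1 x2 y1 y2 assume lt: "x1 < x2" "y1 < y2" and nw: "(x1, y2) \<in> P" and se: "(x2, y1) \<in> P"
  have fin: "finite P" using assms unfolding parallelogram_polyomino_def polyomino_def by blast
  obtain p u l where E: "boundary_edges P = path_edges p u \<union> path_edges p l"
    using assms unfolding parallelogram_polyomino_def by blast
  note order = two_paths_V_order[OF E]
  obtain a where a: "a \<le> x1" "V (a, y2) \<in> boundary_edges P"
    using boundary_edges_V_left[OF fin nw] by blast
  obtain k where k: "x2 < k" "V (k, y1) \<in> boundary_edges P"
    using boundary_edges_V_right[OF fin se] by blast
  show "(x1, y1) \<in> P \<longleftrightarrow> (x2, y2) \<in> P"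
  proof
    assume "(x1, y1) \<in> P"
    show "(x2, y2) \<in> P"
    proof (rule ccontr)
      assume "(x2, y2) \<notin> P"
      then obtain j where "x1 < j" "j \<le> x2" "V (j, y2) \<in> boundary_edges P"
        using boundary_edges_V_between[of x1 x2 y2 P] lt nw by blast
      then show False using order(1)[OF k(2) a(2)] a k lt by force
    qed
  next
    assume "(x2, y2) \<in> P"
    show "(x1, y1) \<in> P"
    proof (rule ccontr)
      assume "(x1, y1) \<notin> P"
      then obtain j where "x1 < j" "j \<le> x2" "V (j, y1) \<in> boundary_edges P"
        using boundary_edges_V_between[of x1 x2 y1 P] lt se by blast
      then show False using order(2)[OF a(2) _ k(2)] a k lt by force
    qed
  qed
qed

section \<open>Rectangles inside pattern-avoiding polyominoes\<close>

definition adj_rel :: "cell set \<Rightarrow> (cell \<times> cell) set" where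
  "adj_rel W = {(a, b). a \<in> W \<and> b \<in> W \<and> edge_adjacent a b}"

definition cell_connected :: "cell set \<Rightarrow> bool" where
  "cell_connected W \<longleftrightarrow> (\<forall>a\<in>W. \<forall>b\<in>W. (a, b) \<in> (adj_rel W)\<^sup>*)"

lemma polyomino_iff: "polyomino P \<longleftrightarrow> finite P \<and> P \<noteq> {} \<and> cell_connected P"
  unfolding polyomino_def cell_connected_def adj_rel_def by blast

lemma edge_adjacent_sym: "edge_adjacent a b \<Longrightarrow> edge_adjacent b a"
  unfolding edge_adjacent_def by (simp add: abs_minus_commute)

lemma edge_adjacent_cases:
  assumes "edge_adjacent (x, y) (x', y')"
  obtains "x' = x + 1" "y' = y" | "x' = x - 1" "y' = y" | "x' = x" "y' = y + 1" | "x' = x" "y' = y - 1"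
  using assms unfolding edge_adjacent_def by (auto simp: abs_if split: if_splits) arith

lemma cell_connected_insert:
  assumes "cell_connected W" and "d \<in> W" and "edge_adjacent d e"
  shows "cell_connected (insert e W)"
proof -
  have "(adj_rel W)\<^sup>* \<subseteq> (adj_rel (insert e W))\<^sup>*"
    by (rule rtrancl_mono) (auto simp: adj_rel_def)
  moreover have "(d, e) \<in> adj_rel (insert e W)" "(e, d) \<in> adj_rel (insert e W)"
    using assms(2,3) edge_adjacent_sym by (auto simp: adj_rel_def)
  ultimately show ?thesis
    using assms(1,2) unfolding cell_connected_def
    by (auto intro: rtrancl_trans rtrancl_into_rtrancl converse_rtrancl_into_rtrancl)
qed

lemma cell_connected_crosses_row:
  assumes "cell_connected W" and "a \<in> W" and "b \<in> W" and "snd a \<le> y" and "y < snd b"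
  shows "\<exists>x. (x, y) \<in> W \<and> (x, y + 1) \<in> W"
proof -
  have "(a, b) \<in> (adj_rel W)\<^sup>*" using assms(1-3) unfolding cell_connected_def by blast
  then have "\<exists>c d. c \<in> W \<and> d \<in> W \<and> edge_adjacent c d \<and> snd c \<le> y \<and> y < snd d"
    using assms(4,5)
  proof (induction rule: rtrancl_induct)
    case (step c d)
    then show ?case unfolding adj_rel_def by (cases "snd c \<le> y") (blast, force)
  qed simp
  then obtain cx cy dx dy where c: "(cx, cy) \<in> W" "(dx, dy) \<in> W" "cy \<le> y" "y < dy"
    and adj: "edge_adjacent (cx, cy) (dx, dy)"
    by fastforce
  from adj show ?thesis
    by (rule edge_adjacent_cases) (use c in force)+
qed

definition nw_of :: "cell \<Rightarrow> cell \<Rightarrow> bool" where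
  "nw_of a b \<longleftrightarrow> fst a \<le> fst b \<and> snd b \<le> snd a"

definition nw_rect :: "cell \<Rightarrow> cell \<Rightarrow> cell set" where
  "nw_rect a b = {c. nw_of a c \<and> nw_of c b}"

definition nw_rects_within :: "cell set \<Rightarrow> cell set \<Rightarrow> bool" where
  "nw_rects_within W P \<longleftrightarrow> (\<forall>a\<in>W. \<forall>b\<in>W. nw_of a b \<longrightarrow> nw_rect a b \<subseteq> P)"

lemma nw_of_trans: "nw_of a b \<Longrightarrow> nw_of b c \<Longrightarrow> nw_of a c"
  unfolding nw_of_def by auto

lemma nw_rect_mono: "nw_of b b' \<Longrightarrow> nw_rect a b \<subseteq> nw_rect a b'"
  unfolding nw_rect_def using nw_of_trans by blast

lemma nw_rect_self: "nw_rect a a = {a}"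
  unfolding nw_rect_def nw_of_def by (cases a) auto

lemma mem_nw_rect_iff:
  "(u, v) \<in> nw_rect a b \<longleftrightarrow> fst a \<le> u \<and> u \<le> fst b \<and> snd b \<le> v \<and> v \<le> snd a"
  unfolding nw_rect_def nw_of_def by auto

text \<open>Both reflections preserve pattern avoidance; the first preserves and the second reverses the
  north-west order, so one case of the growing step yields all others.\<close>
definition antidiag_reflect :: "cell \<Rightarrow> cell" where
  "antidiag_reflect c = (- snd c, - fst c)"

definition point_reflect :: "cell \<Rightarrow> cell" where
  "point_reflect c = (- fst c, - snd c)"

lemma antidiag_reflect_involution [simp]: "antidiag_reflect (antidiag_reflect c) = c"
  by (simp add: antidiag_reflect_def)

lemma point_reflect_involution [simp]: "point_reflect (point_reflect c) = c"
  by (simp add: point_reflect_def)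

lemma mem_image_involution_iff:
  assumes "\<And>c. f (f c) = c"
  shows "c \<in> f ` A \<longleftrightarrow> f c \<in> A"
  by (metis assms image_eqI imageE)

lemma inj_involution: "(\<And>c. f (f c) = c) \<Longrightarrow> inj f"
  by (metis injI)

lemma cell_connected_image:
  assumes "cell_connected W" and adj: "\<And>a b. edge_adjacent a b \<Longrightarrow> edge_adjacent (f a) (f b)"
  shows "cell_connected (f ` W)"
proof -
  have "(f a, f b) \<in> (adj_rel (f ` W))\<^sup>*" if "(a, b) \<in> (adj_rel W)\<^sup>*" for a b
    using that
  proof (induction rule: rtrancl_induct)
    case (step b c)
    then have "(f b, f c) \<in> adj_rel (f ` W)" using adj by (auto simp: adj_rel_def)
    with step.IH show ?case by (rule rtrancl_into_rtrancl)
  qed simp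
  then show ?thesis using assms(1) unfolding cell_connected_def by blast
qed

lemma edge_adjacent_antidiag_reflect: "edge_adjacent a b \<Longrightarrow> edge_adjacent (antidiag_reflect a) (antidiag_reflect b)"
  unfolding edge_adjacent_def antidiag_reflect_def by (simp add: abs_minus_commute add.commute)

lemma edge_adjacent_point_reflect: "edge_adjacent a b \<Longrightarrow> edge_adjacent (point_reflect a) (point_reflect b)"
  unfolding edge_adjacent_def point_reflect_def by (simp add: abs_minus_commute)

lemma nw_of_antidiag_reflect: "nw_of (antidiag_reflect a) (antidiag_reflect b) \<longleftrightarrow> nw_of a b"
  unfolding nw_of_def antidiag_reflect_def by auto

lemma nw_of_point_reflect: "nw_of (point_reflect a) (point_reflect b) \<longleftrightarrow> nw_of b a"
  unfolding nw_of_def point_reflect_def by auto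

lemma nw_rect_antidiag_reflect:
  "nw_rect (antidiag_reflect a) (antidiag_reflect b) = antidiag_reflect ` nw_rect a b"
proof (rule set_eqI)
  fix c
  have "c \<in> nw_rect (antidiag_reflect a) (antidiag_reflect b) \<longleftrightarrow> antidiag_reflect c \<in> nw_rect a b"
    unfolding nw_rect_def nw_of_def antidiag_reflect_def by auto
  then show "c \<in> nw_rect (antidiag_reflect a) (antidiag_reflect b) \<longleftrightarrow> c \<in> antidiag_reflect ` nw_rect a b"
    by (simp add: mem_image_involution_iff[OF antidiag_reflect_involution])
qed

lemma nw_rect_point_reflect:
  "nw_rect (point_reflect a) (point_reflect b) = point_reflect ` nw_rect b a"
proof (rule set_eqI)
  fix c
  have "c \<in> nw_rect (point_reflect a) (point_reflect b) \<longleftrightarrow> point_reflect c \<in> nw_rect b a"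
    unfolding nw_rect_def nw_of_def point_reflect_def by auto
  then show "c \<in> nw_rect (point_reflect a) (point_reflect b) \<longleftrightarrow> c \<in> point_reflect ` nw_rect b a"
    by (simp add: mem_image_involution_iff[OF point_reflect_involution])
qed

lemma avoids_corner_patterns_antidiag_reflect:
  assumes "avoids_corner_patterns P"
  shows "avoids_corner_patterns (antidiag_reflect ` P)"
  unfolding avoids_corner_patterns_def mem_image_involution_iff[OF antidiag_reflect_involution]
proof (intro allI impI)
  fix x1 x2 y1 y2 :: int
  assume "x1 < x2" "y1 < y2" "antidiag_reflect (x1, y2) \<in> P" "antidiag_reflect (x2, y1) \<in> P"
  then show "antidiag_reflect (x1, y1) \<in> P \<longleftrightarrow> antidiag_reflect (x2, y2) \<in> P"
    using assms[unfolded avoids_corner_patterns_def, rule_format, of "- y2" "- y1" "- x2" "- x1"]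
    by (auto simp: antidiag_reflect_def)
qed

lemma avoids_corner_patterns_point_reflect:
  assumes "avoids_corner_patterns P"
  shows "avoids_corner_patterns (point_reflect ` P)"
  unfolding avoids_corner_patterns_def mem_image_involution_iff[OF point_reflect_involution]
proof (intro allI impI)
  fix x1 x2 y1 y2 :: int
  assume "x1 < x2" "y1 < y2" "point_reflect (x1, y2) \<in> P" "point_reflect (x2, y1) \<in> P"
  then show "point_reflect (x1, y1) \<in> P \<longleftrightarrow> point_reflect (x2, y2) \<in> P"
    using assms[unfolded avoids_corner_patterns_def, rule_format, of "- x2" "- x1" "- y2" "- y1"]
    by (auto simp: point_reflect_def)
qed

lemma nw_rects_within_antidiag_reflect:
  assumes "nw_rects_within W P"
  shows "nw_rects_within (antidiag_reflect ` W) (antidiag_reflect ` P)"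
  unfolding nw_rects_within_def
proof (intro ballI impI)
  fix a' b' assume "a' \<in> antidiag_reflect ` W" "b' \<in> antidiag_reflect ` W" "nw_of a' b'"
  then obtain a b where "a \<in> W" "b \<in> W" "a' = antidiag_reflect a" "b' = antidiag_reflect b"
    and "nw_of a b" by (auto simp: nw_of_antidiag_reflect)
  then show "nw_rect a' b' \<subseteq> antidiag_reflect ` P"
    using assms unfolding nw_rects_within_def by (auto simp: nw_rect_antidiag_reflect)
qed

lemma nw_rects_within_point_reflect:
  assumes "nw_rects_within W P"
  shows "nw_rects_within (point_reflect ` W) (point_reflect ` P)"
  unfolding nw_rects_within_def
proof (intro ballI impI)
  fix a' b' assume "a' \<in> point_reflect ` W" "b' \<in> point_reflect ` W" "nw_of a' b'"
  then obtain a b where "a \<in> W" "b \<in> W" "a' = point_reflect a" "b' = point_reflect b"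
    and "nw_of b a" by (auto simp: nw_of_point_reflect)
  then show "nw_rect a' b' \<subseteq> point_reflect ` P"
    using assms unfolding nw_rects_within_def by (auto simp: nw_rect_point_reflect)
qed

text \<open>If t lies in the row of e, a path inside W from t to the cell above e crosses into the next
  row through a vertical domino.\<close>
lemma nw_rect_extend_below:
  assumes avoid: "avoids_corner_patterns P" and "W \<subseteq> P"
    and rects: "nw_rects_within W P" and conn: "cell_connected W"
    and d: "(x, y + 1) \<in> W" and e: "(x, y) \<in> P" and t: "t \<in> W" "nw_of t (x, y)"
  shows "nw_rect t (x, y) \<subseteq> P"
proof -
  have d_P: "(x, y + 1) \<in> P" using d \<open>W \<subseteq> P\<close> by blast
  have from_above: "nw_rect s (x, y) \<subseteq> P" if s: "s \<in> W" "nw_of s (x, y + 1)" for s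
  proof
    fix c assume c: "c \<in> nw_rect s (x, y)"
    obtain u v where uv: "c = (u, v)" by (cases c)
    have above: "nw_rect s (x, y + 1) \<subseteq> P" using rects s d unfolding nw_rects_within_def by blast
    show "c \<in> P"
    proof (cases "v = y \<and> u < x")
      case True
      then have "(u, y + 1) \<in> P" using above c s uv by (auto simp: mem_nw_rect_iff nw_of_def)
      then show ?thesis
        using avoid[unfolded avoids_corner_patterns_def, rule_format, of u x y "y + 1"] True uv e d_P
        by simp
    next
      case False
      then have "c = (x, y) \<or> c \<in> nw_rect s (x, y + 1)" using c uv by (auto simp: mem_nw_rect_iff)
      then show ?thesis using e above by blast
    qed
  qed
  show ?thesis
  proof (cases "y < snd t")
    case True
    then show ?thesis using from_above t unfolding nw_of_def by simp
  next
    case False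
    then have ty: "snd t = y" using t(2) unfolding nw_of_def by simp
    obtain sx where s: "(sx, y) \<in> W" "(sx, y + 1) \<in> W"
      using cell_connected_crosses_row[OF conn t(1) d] ty by auto
    show ?thesis
    proof
      fix c assume c: "c \<in> nw_rect t (x, y)"
      obtain u where u: "c = (u, y)" "fst t \<le> u" "u \<le> x"
        using c ty by (cases c) (auto simp: mem_nw_rect_iff)
      show "c \<in> P"
      proof (cases "u \<le> sx")
        case True
        then have "c \<in> nw_rect t (sx, y)" "nw_of t (sx, y)"
          using u ty by (auto simp: mem_nw_rect_iff nw_of_def)
        then show ?thesis using rects t(1) s(1) unfolding nw_rects_within_def by blast
      next
        case False
        then have "c \<in> nw_rect (sx, y + 1) (x, y)" "nw_of (sx, y + 1) (x, y + 1)"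
          using u by (auto simp: mem_nw_rect_iff nw_of_def)
        then show ?thesis using from_above s(2) by blast
      qed
    qed
  qed
qed

lemma nw_rect_extend:
  assumes avoid: "avoids_corner_patterns P" and W: "W \<subseteq> P"
    and rects: "nw_rects_within W P" and conn: "cell_connected W"
    and d: "d \<in> W" and e: "e \<in> P" and adj: "edge_adjacent d e"
    and t: "t \<in> W" "nw_of t e"
  shows "nw_rect t e \<subseteq> P"
proof -
  obtain x y dx dy where xy: "e = (x, y)" "d = (dx, dy)" by (cases e, cases d)
  have "edge_adjacent (x, y) (dx, dy)" using adj edge_adjacent_sym xy by blast
  then show ?thesis
  proof (rule edge_adjacent_cases)
    assume "dx = x + 1" "dy = y"
    then have "nw_of e d" using xy by (simp add: nw_of_def)
    then show ?thesis
      using nw_rect_mono[of e d t] rects t d nw_of_trans unfolding nw_rects_within_def by blast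
  next
    assume "dx = x" "dy = y - 1"
    then have "nw_of e d" using xy by (simp add: nw_of_def)
    then show ?thesis
      using nw_rect_mono[of e d t] rects t d nw_of_trans unfolding nw_rects_within_def by blast
  next
    assume "dx = x" "dy = y + 1"
    then show ?thesis using nw_rect_extend_below[OF avoid W rects conn] d e t xy by simp
  next
    assume "dx = x - 1" "dy = y"
    then have "antidiag_reflect d = (fst (antidiag_reflect e), snd (antidiag_reflect e) + 1)"
      using xy by (simp add: antidiag_reflect_def)
    then have "(fst (antidiag_reflect e), snd (antidiag_reflect e) + 1) \<in> antidiag_reflect ` W"
      using d by (metis imageI)
    then have "nw_rect (antidiag_reflect t) (antidiag_reflect e) \<subseteq> antidiag_reflect ` P"
      using nw_rect_extend_below[OF avoids_corner_patterns_antidiag_reflect[OF avoid] image_mono[OF W]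
          nw_rects_within_antidiag_reflect[OF rects] cell_connected_image[OF conn edge_adjacent_antidiag_reflect],
          of "fst (antidiag_reflect e)" "snd (antidiag_reflect e)" "antidiag_reflect t"]
        e t by (simp add: nw_of_antidiag_reflect)
    then show ?thesis
      by (simp add: nw_rect_antidiag_reflect inj_image_subset_iff inj_involution)
  qed
qed

lemma nw_rects_within_insert:
  assumes avoid: "avoids_corner_patterns P" and W: "W \<subseteq> P"
    and rects: "nw_rects_within W P" and conn: "cell_connected W"
    and d: "d \<in> W" and e: "e \<in> P" and adj: "edge_adjacent d e"
  shows "nw_rects_within (insert e W) P"
proof -
  have to_e: "nw_rect t e \<subseteq> P" if "t \<in> W" "nw_of t e" for t
    using nw_rect_extend[OF avoid W rects conn d e adj that] .
  have from_e: "nw_rect e t \<subseteq> P" if t: "t \<in> W" "nw_of e t" for t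
  proof -
    have "nw_rect (point_reflect t) (point_reflect e) \<subseteq> point_reflect ` P"
      using nw_rect_extend[OF avoids_corner_patterns_point_reflect[OF avoid] image_mono[OF W]
          nw_rects_within_point_reflect[OF rects] cell_connected_image[OF conn edge_adjacent_point_reflect]
          imageI[OF d] imageI[OF e] edge_adjacent_point_reflect[OF adj] imageI[OF t(1)]]
        t(2) by (simp add: nw_of_point_reflect)
    then show ?thesis
      by (simp add: nw_rect_point_reflect inj_image_subset_iff inj_involution)
  qed
  show ?thesis
    using rects to_e from_e e unfolding nw_rects_within_def by (auto simp: nw_rect_self)
qed

lemma polyomino_nw_rect_subset:
  assumes "polyomino P" and avoid: "avoids_corner_patterns P"
    and "a \<in> P" and "b \<in> P" and "nw_of a b"
  shows "nw_rect a b \<subseteq> P"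
proof -
  have "(a, b) \<in> (adj_rel P)\<^sup>*" using assms(1,3,4) unfolding polyomino_iff cell_connected_def by blast
  then have "\<exists>W. W \<subseteq> P \<and> a \<in> W \<and> b \<in> W \<and> nw_rects_within W P \<and> cell_connected W"
  proof (induction rule: rtrancl_induct)
    case base
    have "cell_connected {a}" by (simp add: cell_connected_def)
    then show ?case using assms(3) by (intro exI[of _ "{a}"]) (auto simp: nw_rects_within_def nw_rect_self)
  next
    case (step d e)
    then obtain W where W: "W \<subseteq> P" "a \<in> W" "d \<in> W" "nw_rects_within W P" "cell_connected W" by blast
    have "e \<in> P" "edge_adjacent d e" using step(2) by (auto simp: adj_rel_def)
    then show ?case
      using W nw_rects_within_insert[OF avoid W(1,4,5,3)] cell_connected_insert[OF W(5,3)]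
      by (intro exI[of _ "insert e W"]) auto
  qed
  then show ?thesis using assms(5) unfolding nw_rects_within_def by blast
qed

section \<open>Staircase paths\<close>

lemma path_points_nonempty: "path_points p ss \<noteq> []"
  by (induction p ss rule: path_points.induct) auto

lemma path_end_Nil [simp]: "path_end p [] = p"
  by (simp add: path_end_def)

lemma path_end_Cons [simp]: "path_end p (s # ss) = path_end (step p s) ss"
  by (simp add: path_end_def path_points_nonempty)

lemma path_end_append: "path_end p (xs @ ys) = path_end (path_end p xs) ys"
  by (induction xs arbitrary: p) auto

lemma start_in_path_points: "p \<in> set (path_points p ss)"
  by (cases ss) auto

lemma path_points_append:
  "set (path_points p (xs @ ys)) = set (path_points p xs) \<union> set (path_points (path_end p xs) ys)"
  by (induction xs arbitrary: p) (auto simp: start_in_path_points)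

lemma path_edges_Cons: "path_edges p (s # ss) = insert (if s then V p else H p) (path_edges (step p s) ss)"
  by (cases s) auto

lemma path_edges_append: "path_edges p (xs @ ys) = path_edges p xs \<union> path_edges (path_end p xs) ys"
  by (induction xs arbitrary: p) (auto simp: path_edges_Cons)

lemma east_run_end: "path_end (x, y) (replicate k False) = (x + int k, y)"
  by (induction k arbitrary: x) auto

lemma mem_east_run_points:
  "(u, v) \<in> set (path_points (x, y) (replicate k False)) \<longleftrightarrow> v = y \<and> x \<le> u \<and> u \<le> x + int k"
proof (induction k arbitrary: x)
  case (Suc k)
  have "set (path_points (x, y) (replicate (Suc k) False)) =
      insert (x, y) (set (path_points (x + 1, y) (replicate k False)))"
    by simp
  then show ?case using Suc[of "x + 1"] by auto
qed auto

lemma east_run_edges: "path_edges (x, y) (replicate k False) = {H (u, y) | u. x \<le> u \<and> u < x + int k}"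
  by (induction k arbitrary: x) auto

text \<open>The path from (h (y - 1), y) that in each row v = y, ..., y + n runs east to column h v and,
  except in the last row, then steps north.\<close>
fun staircase :: "(int \<Rightarrow> int) \<Rightarrow> int \<Rightarrow> nat \<Rightarrow> bool list" where
  "staircase h y 0 = replicate (nat (h y - h (y - 1))) False"
| "staircase h y (Suc n) = replicate (nat (h y - h (y - 1))) False @ True # staircase h (y + 1) n"

lemma staircase_run_end:
  "h (y - 1) \<le> h y \<Longrightarrow> path_end (h (y - 1), y) (replicate (nat (h y - h (y - 1))) False) = (h y, y)"
  by (simp add: east_run_end)

lemma staircase_end:
  assumes "\<And>v. y \<le> v \<Longrightarrow> v \<le> y + int n \<Longrightarrow> h (v - 1) \<le> h v"
  shows "path_end (h (y - 1), y) (staircase h y n) = (h (y + int n), y + int n)"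
  using assms
proof (induction n arbitrary: y)
  case 0
  then show ?case using staircase_run_end[of h y] by simp
next
  case (Suc n)
  have "path_end (h y, y + 1) (staircase h (y + 1) n) = (h (y + 1 + int n), y + 1 + int n)"
    using Suc.IH[of "y + 1"] Suc.prems by simp
  moreover have "h (y - 1) \<le> h y" using Suc.prems[of y] by simp
  ultimately show ?case
    unfolding staircase.simps(2) path_end_append staircase_run_end[OF \<open>h (y - 1) \<le> h y\<close>]
    by (simp add: algebra_simps)
qed

lemma mem_staircase_points:
  assumes "\<And>v. y \<le> v \<Longrightarrow> v \<le> y + int n \<Longrightarrow> h (v - 1) \<le> h v"
  shows "(u, v) \<in> set (path_points (h (y - 1), y) (staircase h y n)) \<longleftrightarrow>
           y \<le> v \<and> v \<le> y + int n \<and> h (v - 1) \<le> u \<and> u \<le> h v"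
  using assms
proof (induction n arbitrary: y)
  case 0
  then show ?case using mem_east_run_points[of u v "h (y - 1)" y] by auto
next
  case (Suc n)
  have IH: "(u, v) \<in> set (path_points (h y, y + 1) (staircase h (y + 1) n)) \<longleftrightarrow>
           y + 1 \<le> v \<and> v \<le> y + 1 + int n \<and> h (v - 1) \<le> u \<and> u \<le> h v"
    using Suc.IH[of "y + 1"] Suc.prems by simp
  have "h (y - 1) \<le> h y" using Suc.prems[of y] by simp
  show ?case
    unfolding staircase.simps(2) path_points_append staircase_run_end[OF \<open>h (y - 1) \<le> h y\<close>]
    using mem_east_run_points[of u v "h (y - 1)" y "nat (h y - h (y - 1))"] \<open>h (y - 1) \<le> h y\<close> IH
    by (cases "v = y") auto
qed

lemma H_mem_staircase_edges:
  assumes "\<And>v. y \<le> v \<Longrightarrow> v \<le> y + int n \<Longrightarrow> h (v - 1) \<le> h v"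
  shows "H (u, v) \<in> path_edges (h (y - 1), y) (staircase h y n) \<longleftrightarrow>
           y \<le> v \<and> v \<le> y + int n \<and> h (v - 1) \<le> u \<and> u < h v"
  using assms
proof (induction n arbitrary: y)
  case 0
  then show ?case using east_run_edges[of "h (y - 1)" y] by auto
next
  case (Suc n)
  have IH: "H (u, v) \<in> path_edges (h y, y + 1) (staircase h (y + 1) n) \<longleftrightarrow>
           y + 1 \<le> v \<and> v \<le> y + 1 + int n \<and> h (v - 1) \<le> u \<and> u < h v"
    using Suc.IH[of "y + 1"] Suc.prems by simp
  have "h (y - 1) \<le> h y" using Suc.prems[of y] by simp
  show ?case
    unfolding staircase.simps(2) path_edges_append staircase_run_end[OF \<open>h (y - 1) \<le> h y\<close>]
    using east_run_edges[of "h (y - 1)" y "nat (h y - h (y - 1))"] \<open>h (y - 1) \<le> h y\<close> IH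
    by (cases "v = y") auto
qed

lemma V_mem_staircase_edges:
  assumes "\<And>v. y \<le> v \<Longrightarrow> v \<le> y + int n \<Longrightarrow> h (v - 1) \<le> h v"
  shows "V (u, v) \<in> path_edges (h (y - 1), y) (staircase h y n) \<longleftrightarrow> y \<le> v \<and> v < y + int n \<and> u = h v"
  using assms
proof (induction n arbitrary: y)
  case 0
  then show ?case using east_run_edges[of "h (y - 1)" y] by auto
next
  case (Suc n)
  have IH: "V (u, v) \<in> path_edges (h y, y + 1) (staircase h (y + 1) n) \<longleftrightarrow>
           y + 1 \<le> v \<and> v < y + 1 + int n \<and> u = h v"
    using Suc.IH[of "y + 1"] Suc.prems by simp
  have "h (y - 1) \<le> h y" using Suc.prems[of y] by simp
  show ?case
    unfolding staircase.simps(2) path_edges_append staircase_run_end[OF \<open>h (y - 1) \<le> h y\<close>]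
    using east_run_edges[of "h (y - 1)" y "nat (h y - h (y - 1))"] IH
    by (cases "v = y") auto
qed

section \<open>Pattern-avoiding polyominoes are parallelogram polyominoes\<close>

locale staircase_rows =
  fixes y0 y1 :: int and a b :: "int \<Rightarrow> int"
  assumes bottom_le_top: "y0 \<le> y1"
    and row_nonempty: "\<And>y. y0 \<le> y \<Longrightarrow> y \<le> y1 \<Longrightarrow> a y \<le> b y"
    and row_step: "\<And>y. y0 \<le> y \<Longrightarrow> y < y1 \<Longrightarrow> a y \<le> a (y + 1) \<and> b y \<le> b (y + 1) \<and> a (y + 1) \<le> b y"
begin

definition cells :: "cell set" where
  "cells = {(x, y). y0 \<le> y \<and> y \<le> y1 \<and> a y \<le> x \<and> x \<le> b y}"

text \<open>The upper path climbs along the left ends of the rows and then runs along the top; the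
  lower path runs along the bottom and then climbs along the right ends.\<close>
definition upper_col :: "int \<Rightarrow> int" where
  "upper_col v = (if v < y0 then a y0 else if v \<le> y1 then a v else b y1 + 1)"

definition lower_col :: "int \<Rightarrow> int" where
  "lower_col v = (if v < y0 then a y0 else if v \<le> y1 then b v + 1 else b y1 + 1)"

definition start :: cell where
  "start = (a y0, y0)"

definition upper_path :: "bool list" where
  "upper_path = staircase upper_col y0 (nat (y1 - y0 + 1))"

definition lower_path :: "bool list" where
  "lower_path = staircase lower_col y0 (nat (y1 - y0 + 1))"

lemma row_step_down: "y0 < v \<Longrightarrow> v \<le> y1 \<Longrightarrow> a (v - 1) \<le> a v \<and> b (v - 1) \<le> b v \<and> a v \<le> b (v - 1)"
  using row_step[of "v - 1"] by simp

lemma rows_count: "y0 + int (nat (y1 - y0 + 1)) = y1 + 1"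
  using bottom_le_top by simp

lemma upper_col_mono: "y0 \<le> v \<Longrightarrow> v \<le> y0 + int (nat (y1 - y0 + 1)) \<Longrightarrow> upper_col (v - 1) \<le> upper_col v"
  using rows_count row_step_down[of v] row_nonempty[of y1] bottom_le_top
  by (cases "v = y0"; cases "v = y1 + 1") (auto simp: upper_col_def)

lemma lower_col_mono: "y0 \<le> v \<Longrightarrow> v \<le> y0 + int (nat (y1 - y0 + 1)) \<Longrightarrow> lower_col (v - 1) \<le> lower_col v"
  using rows_count row_step_down[of v] row_nonempty[of y0] bottom_le_top
  by (cases "v = y0"; cases "v = y1 + 1") (auto simp: lower_col_def)

lemma upper_start: "(upper_col (y0 - 1), y0) = start"
  by (simp add: upper_col_def start_def)

lemma lower_start: "(lower_col (y0 - 1), y0) = start"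
  by (simp add: lower_col_def start_def)

lemma upper_path_end: "path_end start upper_path = (b y1 + 1, y1 + 1)"
  using staircase_end[of y0 "nat (y1 - y0 + 1)" upper_col, OF upper_col_mono] bottom_le_top
  unfolding upper_start upper_path_def rows_count by (simp add: upper_col_def)

lemma lower_path_end: "path_end start lower_path = (b y1 + 1, y1 + 1)"
  using staircase_end[of y0 "nat (y1 - y0 + 1)" lower_col, OF lower_col_mono] bottom_le_top
  unfolding lower_start lower_path_def rows_count by (simp add: lower_col_def)

lemma mem_upper_points:
  "(x, v) \<in> set (path_points start upper_path) \<longleftrightarrow> (v = y0 \<and> x = a y0) \<or>
     (y0 < v \<and> v \<le> y1 \<and> a (v - 1) \<le> x \<and> x \<le> a v) \<or> (v = y1 + 1 \<and> a y1 \<le> x \<and> x \<le> b y1 + 1)"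
  using mem_staircase_points[of y0 "nat (y1 - y0 + 1)" upper_col, OF upper_col_mono] bottom_le_top
  unfolding upper_start upper_path_def rows_count
  by (cases "v = y0"; cases "v = y1 + 1") (auto simp: upper_col_def)

lemma mem_lower_points:
  "(x, v) \<in> set (path_points start lower_path) \<longleftrightarrow> (v = y0 \<and> a y0 \<le> x \<and> x \<le> b y0 + 1) \<or>
     (y0 < v \<and> v \<le> y1 \<and> b (v - 1) + 1 \<le> x \<and> x \<le> b v + 1) \<or> (v = y1 + 1 \<and> x = b y1 + 1)"
  using mem_staircase_points[of y0 "nat (y1 - y0 + 1)" lower_col, OF lower_col_mono] bottom_le_top
  unfolding lower_start lower_path_def rows_count
  by (cases "v = y0"; cases "v = y1 + 1") (auto simp: lower_col_def)

lemma H_mem_upper_edges: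
  "H (x, v) \<in> path_edges start upper_path \<longleftrightarrow>
     (y0 < v \<and> v \<le> y1 \<and> a (v - 1) \<le> x \<and> x < a v) \<or> (v = y1 + 1 \<and> a y1 \<le> x \<and> x < b y1 + 1)"
  using H_mem_staircase_edges[of y0 "nat (y1 - y0 + 1)" upper_col, OF upper_col_mono] bottom_le_top
  unfolding upper_start upper_path_def rows_count
  by (cases "v = y0"; cases "v = y1 + 1") (auto simp: upper_col_def)

lemma H_mem_lower_edges:
  "H (x, v) \<in> path_edges start lower_path \<longleftrightarrow>
     (v = y0 \<and> a y0 \<le> x \<and> x < b y0 + 1) \<or> (y0 < v \<and> v \<le> y1 \<and> b (v - 1) + 1 \<le> x \<and> x < b v + 1)"
  using H_mem_staircase_edges[of y0 "nat (y1 - y0 + 1)" lower_col, OF lower_col_mono] bottom_le_top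
  unfolding lower_start lower_path_def rows_count
  by (cases "v = y0"; cases "v = y1 + 1") (auto simp: lower_col_def)

lemma V_mem_upper_edges: "V (x, v) \<in> path_edges start upper_path \<longleftrightarrow> y0 \<le> v \<and> v \<le> y1 \<and> x = a v"
  using V_mem_staircase_edges[of y0 "nat (y1 - y0 + 1)" upper_col, OF upper_col_mono] bottom_le_top
  unfolding upper_start upper_path_def rows_count
  by (auto simp: upper_col_def)

lemma V_mem_lower_edges: "V (x, v) \<in> path_edges start lower_path \<longleftrightarrow> y0 \<le> v \<and> v \<le> y1 \<and> x = b v + 1"
  using V_mem_staircase_edges[of y0 "nat (y1 - y0 + 1)" lower_col, OF lower_col_mono] bottom_le_top
  unfolding lower_start lower_path_def rows_count
  by (auto simp: lower_col_def)

lemma paths_meet_at_ends: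
  "set (path_points start upper_path) \<inter> set (path_points start lower_path) =
     {start, path_end start upper_path}"
proof (rule set_eqI)
  fix c :: cell
  obtain x v where c: "c = (x, v)" by (cases c)
  show "c \<in> set (path_points start upper_path) \<inter> set (path_points start lower_path) \<longleftrightarrow>
      c \<in> {start, path_end start upper_path}"
    unfolding c Int_iff mem_upper_points mem_lower_points upper_path_end
    using row_step_down[of v] row_nonempty[of y0] row_nonempty[of y1] bottom_le_top
    by (auto simp: start_def)
qed

lemma paths_edge_disjoint: "path_edges start upper_path \<inter> path_edges start lower_path = {}"
proof (rule equals0I)
  fix e assume e: "e \<in> path_edges start upper_path \<inter> path_edges start lower_path"
  show False
  proof (cases e)
    case (H c)
    obtain x v where "c = (x, v)" by (cases c)
    then show False using e H H_mem_upper_edges H_mem_lower_edges row_step_down[of v] bottom_le_top by auto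
  next
    case (V c)
    obtain x v where "c = (x, v)" by (cases c)
    then show False using e V V_mem_upper_edges V_mem_lower_edges row_nonempty[of v] by auto
  qed
qed

lemma boundary_edges_cells:
  "boundary_edges cells = path_edges start upper_path \<union> path_edges start lower_path"
proof (rule set_eqI)
  fix e
  show "e \<in> boundary_edges cells \<longleftrightarrow> e \<in> path_edges start upper_path \<union> path_edges start lower_path"
  proof (cases e)
    case (H c)
    obtain x v where c: "c = (x, v)" by (cases c)
    show ?thesis
      unfolding H c boundary_edges_H_iff Un_iff H_mem_upper_edges H_mem_lower_edges
      using row_step_down[of v] row_nonempty[of v] row_nonempty[of y0] row_nonempty[of y1] bottom_le_top
      by (cases "v = y0"; cases "v = y1 + 1") (auto simp: cells_def)
  next
    case (V c)
    obtain x v where c: "c = (x, v)" by (cases c)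
    show ?thesis
      unfolding V c boundary_edges_V_iff Un_iff V_mem_upper_edges V_mem_lower_edges
      using row_nonempty[of v] by (auto simp: cells_def)
  qed
qed

lemma cells_boundary_paths:
  "\<exists>p u l. path_end p u = path_end p l \<and>
     set (path_points p u) \<inter> set (path_points p l) = {p, path_end p u} \<and>
     path_edges p u \<inter> path_edges p l = {} \<and>
     boundary_edges cells = path_edges p u \<union> path_edges p l"
  using upper_path_end lower_path_end paths_meet_at_ends paths_edge_disjoint boundary_edges_cells
  by metis

end

lemma avoiding_polyomino_staircase_rows:
  assumes poly: "polyomino P" and avoid: "avoids_corner_patterns P"
  obtains y0 y1 a b where "staircase_rows y0 y1 a b" and "P = staircase_rows.cells y0 y1 a b"
proof -
  have fin: "finite P" and ne: "P \<noteq> {}" and conn: "cell_connected P"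
    using poly unfolding polyomino_iff by auto
  define y0 where "y0 = Min (snd ` P)"
  define y1 where "y1 = Max (snd ` P)"
  have "y0 \<in> snd ` P" "y1 \<in> snd ` P"
    using fin ne unfolding y0_def y1_def by (simp_all add: Min_in Max_in)
  then obtain c0 c1 where c0: "c0 \<in> P" "snd c0 = y0" and c1: "c1 \<in> P" "snd c1 = y1"
    by (metis imageE)
  have in_range: "y0 \<le> y \<and> y \<le> y1" if "(x, y) \<in> P" for x y
    using that fin unfolding y0_def y1_def by (auto intro!: Min_le Max_ge rev_image_eqI)
  have domino: "\<exists>x. (x, y) \<in> P \<and> (x, y + 1) \<in> P" if "y0 \<le> y" "y < y1" for y
    using cell_connected_crosses_row[OF conn c0(1) c1(1)] c0 c1 that by simp
  define R where "R y = {x. (x, y) \<in> P}" for y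
  have R_finite: "finite (R y)" for y
  proof -
    have "R y \<subseteq> fst ` P" unfolding R_def by (auto intro: rev_image_eqI)
    then show ?thesis using fin finite_subset by blast
  qed
  have R_nonempty: "R y \<noteq> {}" if "y0 \<le> y" "y \<le> y1" for y
  proof (cases "y = y1")
    case True
    then show ?thesis using c1 unfolding R_def by (cases c1) auto
  next
    case False
    then show ?thesis using domino[of y] that unfolding R_def by auto
  qed
  define a where "a y = Min (R y)" for y
  define b where "b y = Max (R y)" for y
  have ends: "(a y, y) \<in> P" "(b y, y) \<in> P" if "y0 \<le> y" "y \<le> y1" for y
    using Min_in[OF R_finite R_nonempty[OF that]] Max_in[OF R_finite R_nonempty[OF that]]
    unfolding a_def b_def R_def by auto
  have between_ends: "a y \<le> x" "x \<le> b y" if "(x, y) \<in> P" for x y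
    using Min_le[OF R_finite] Max_ge[OF R_finite] that unfolding a_def b_def R_def by auto
  have ab: "a y \<le> b y" if "y0 \<le> y" "y \<le> y1" for y
    using ends[OF that] between_ends by blast
  have rows: "staircase_rows y0 y1 a b"
  proof
    show "y0 \<le> y1" using in_range c0 by (cases c0) auto
    show "a y \<le> b y" if "y0 \<le> y" "y \<le> y1" for y using ab that by blast
    fix y assume y: "y0 \<le> y" "y < y1"
    have overlap: "a (y + 1) \<le> b y"
      using domino[of y] y between_ends by force
    have "nw_rect (a (y + 1), y + 1) (b y, y) \<subseteq> P"
      using polyomino_nw_rect_subset[OF poly avoid] ends[of "y + 1"] ends[of y] y overlap
      by (simp add: nw_of_def)
    then have "(a (y + 1), y) \<in> P" "(b y, y + 1) \<in> P"
      using overlap ab[of y] ab[of "y + 1"] y by (auto simp: mem_nw_rect_iff)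
    then show "a y \<le> a (y + 1) \<and> b y \<le> b (y + 1) \<and> a (y + 1) \<le> b y"
      using between_ends overlap by auto
  qed
  moreover have "P = staircase_rows.cells y0 y1 a b"
  proof (rule set_eqI)
    fix c :: cell
    obtain x y where c: "c = (x, y)" by (cases c)
    have "(x, y) \<in> P" if "y0 \<le> y" "y \<le> y1" "a y \<le> x" "x \<le> b y"
      using polyomino_nw_rect_subset[OF poly avoid ends[OF that(1,2)]] that
      by (auto simp: nw_of_def mem_nw_rect_iff)
    then show "c \<in> P \<longleftrightarrow> c \<in> staircase_rows.cells y0 y1 a b"
      using in_range between_ends c by (auto simp: staircase_rows.cells_def[OF rows])
  qed
  ultimately show ?thesis using that by blast
qed

theorem avoiding_polyomino_parallelogram:
  assumes "polyomino P" and "avoids_corner_patterns P"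
  shows "parallelogram_polyomino P"
proof -
  obtain y0 y1 a b where "staircase_rows y0 y1 a b" and "P = staircase_rows.cells y0 y1 a b"
    using avoiding_polyomino_staircase_rows[OF assms] .
  then show ?thesis
    using staircase_rows.cells_boundary_paths assms(1) unfolding parallelogram_polyomino_def by blast
qed

theorem proposition14:
  shows "{P. parallelogram_polyomino P} =
         Av_P {mat_of_rows [[1, 0], [1, 1]], mat_of_rows [[1, 1], [0, 1]]}"
  unfolding Av_P_corner_patterns
  using parallelogram_avoids_corner_patterns avoiding_polyomino_parallelogram
  unfolding parallelogram_polyomino_def by blast

end
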